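(* Let $T^2=\mathbb{R}^2/\mathbb{Z}^2$, $\alpha\in\mathbb{R}$, and $H:T^2\times\mathbb{R}\to T^2$ the flow $H(x,y,t)=(x+t,y+\alpha t)$. Let $\Delta$ be the partition of $T^2$ into orbits of $H$, $Y$ the space of orbits with the quotient topology, and $p:T^2\to Y$ the projection. Then $p$ has property (CONT), and $p$ has property (COMP) if and only if $\alpha$ is rational.
   Context: A $\Delta$-map is a continuous $h:T^2\to T^2$ mapping each element of $\Delta$ into some element of $\Delta$; $\mathrm{End}(T^2,\Delta)$ is the monoid of $\Delta$-maps, $\mathrm{End}(Y)=C(Y,Y)$, and $\psi(h)$ is the unique map with $p\circ h=\psi(h)\circ p$. Property (COMP): for every compact $L\subset Y$ there is a compact $K\subset T^2$ with $p(K)=L$. Property (CONT): $\psi:\mathrm{End}(T^2,\Delta)\to\mathrm{End}(Y)$ is continuous with respect to compact open topologies. *)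

theory Defs
  imports "HOL-Analysis.Analysis"
begin

definition qtop :: "'a topology \<Rightarrow> ('a \<Rightarrow> 'b) \<Rightarrow> 'b topology" where
  "qtop X p = topology (\<lambda>U. U \<subseteq> p ` topspace X \<and> openin X {x \<in> topspace X. p x \<in> U})"

lemma istopology_qtop:
  "istopology (\<lambda>U. U \<subseteq> p ` topspace X \<and> openin X {x \<in> topspace X. p x \<in> U})"
proof -
  have i: "{x \<in> topspace X. p x \<in> S \<inter> T} = {x \<in> topspace X. p x \<in> S} \<inter> {x \<in> topspace X. p x \<in> T}" for S T
    by auto
  have u: "{x \<in> topspace X. p x \<in> \<Union>K} = (\<Union>S\<in>K. {x \<in> topspace X. p x \<in> S})" for K
    by auto
  show ?thesis
    unfolding istopology_def i u by (auto intro!: openin_Int openin_Union)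
qed

lemma openin_qtop:
  "openin (qtop X p) U \<longleftrightarrow> U \<subseteq> p ` topspace X \<and> openin X {x \<in> topspace X. p x \<in> U}"
  unfolding qtop_def by (simp add: topology_inverse'[OF istopology_qtop])

text \<open>Compact-open topology on C(X,Y); maps are represented as extensional functions
  (undefined outside topspace X).\<close>
definition cmaps :: "'a topology \<Rightarrow> 'b topology \<Rightarrow> ('a \<Rightarrow> 'b) set" where
  "cmaps X Y = {f. continuous_map X Y f \<and> f \<in> extensional (topspace X)}"

definition compact_open :: "'a topology \<Rightarrow> 'b topology \<Rightarrow> ('a \<Rightarrow> 'b) topology" where
  "compact_open X Y = topology_generated_by
     {{f \<in> cmaps X Y. f ` K \<subseteq> U} | K U. compactin X K \<and> openin Y U}"

text \<open>The torus T^2 = R^2/Z^2, modelled (homeomorphically) as S^1 x S^1 in C x C,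
  via (x,y) |-> (exp(2 pi i x), exp(2 pi i y)).\<close>
definition torus :: "(complex \<times> complex) topology" where
  "torus = top_of_set (sphere 0 1 \<times> sphere 0 1)"

text \<open>The linear flow H(x,y,t) = (x+t, y+alpha t).\<close>
definition flowH :: "real \<Rightarrow> complex \<times> complex \<Rightarrow> real \<Rightarrow> complex \<times> complex" where
  "flowH \<alpha> q t = (fst q * cis (2 * pi * t), snd q * cis (2 * pi * \<alpha> * t))"

definition orbp :: "real \<Rightarrow> complex \<times> complex \<Rightarrow> (complex \<times> complex) set" where
  "orbp \<alpha> q = range (flowH \<alpha> q)"

definition Delta :: "real \<Rightarrow> (complex \<times> complex) set set" where
  "Delta \<alpha> = orbp \<alpha> ` topspace torus"

definition orbspace :: "real \<Rightarrow> (complex \<times> complex) set topology" where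
  "orbspace \<alpha> = qtop torus (orbp \<alpha>)"

definition EndDelta :: "real \<Rightarrow> (complex \<times> complex \<Rightarrow> complex \<times> complex) set" where
  "EndDelta \<alpha> = {h \<in> cmaps torus torus. \<forall>D\<in>Delta \<alpha>. \<exists>E\<in>Delta \<alpha>. h ` D \<subseteq> E}"

text \<open>psi(h): the map with p o h = psi(h) o p.\<close>
definition psi :: "real \<Rightarrow> (complex \<times> complex \<Rightarrow> complex \<times> complex)
    \<Rightarrow> (complex \<times> complex) set \<Rightarrow> (complex \<times> complex) set" where
  "psi \<alpha> h = restrict (\<lambda>D. orbp \<alpha> (h (SOME x. x \<in> D))) (topspace (orbspace \<alpha>))"

definition prop_COMP :: "real \<Rightarrow> bool" where
  "prop_COMP \<alpha> \<longleftrightarrow> (\<forall>L. compactin (orbspace \<alpha>) L \<longrightarrow>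
      (\<exists>K. compactin torus K \<and> orbp \<alpha> ` K = L))"

definition prop_CONT :: "real \<Rightarrow> bool" where
  "prop_CONT \<alpha> \<longleftrightarrow> continuous_map (subtopology (compact_open torus torus) (EndDelta \<alpha>))
      (compact_open (orbspace \<alpha>) (orbspace \<alpha>)) (psi \<alpha>)"

end

theory Submission
  imports Defs "HOL-Library.Real_Mod"
begin

text \<open>
  For rational slope the flow is periodic, so every orbit is a compact circle, and a tube-lemma
  argument shows that every open set containing an orbit contains a saturated open neighbourhood
  of it. Hence preimages under p of compact sets are compact, which gives (COMP) at once and
  (CONT) because \<psi> pulls the subbasic set of maps sending L into W back to the subbasic set of
  maps sending the preimage of L into the preimage of W.

  For irrational slope every orbit is dense (Kronecker), so the orbit space is indiscrete: all
  its subsets are compact and its only open sets are trivial, which makes (CONT) automatic.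
  If (COMP) held, the complement of one point p(q0) would lift to a compact K, and the torus
  would be the countable union of the compact sets swept out by K and by q0 in times [-n, n].
  Each of them misses a dense orbit, so has empty interior, contradicting Baire's theorem.
\<close>

section \<open>Quotient maps and the compact-open topology\<close>

lemma topspace_qtop: "topspace (qtop X p) = p ` topspace X"
proof
  show "topspace (qtop X p) \<subseteq> p ` topspace X"
    using openin_qtop[of X p "topspace (qtop X p)"] by simp
  have "{x \<in> topspace X. p x \<in> p ` topspace X} = topspace X"
    by auto
  then show "p ` topspace X \<subseteq> topspace (qtop X p)"
    by (intro openin_subset) (simp add: openin_qtop)
qed

definition saturated_in :: "'a topology \<Rightarrow> ('a \<Rightarrow> 'b) \<Rightarrow> 'a set \<Rightarrow> bool" where
  "saturated_in X p V \<longleftrightarrow> (\<forall>x\<in>V. \<forall>y\<in>topspace X. p y = p x \<longrightarrow> y \<in> V)"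

lemma openin_qtop_image_saturated:
  assumes "openin X V" and "saturated_in X p V"
  shows "openin (qtop X p) (p ` V)"
proof -
  have "{x \<in> topspace X. p x \<in> p ` V} = V"
    using assms openin_subset[OF assms(1)] by (auto simp: saturated_in_def image_iff)
  then show ?thesis
    using assms(1) openin_subset[OF assms(1)] by (auto simp: openin_qtop)
qed

lemma saturated_open_finite_cover:
  assumes fibre: "compactin X {x \<in> topspace X. p x = p q}" and q: "q \<in> topspace X"
    and nbhd: "\<And>W. openin X W \<Longrightarrow> {x \<in> topspace X. p x = p q} \<subseteq> W \<Longrightarrow>
       \<exists>V. openin X V \<and> saturated_in X p V \<and> q \<in> V \<and> V \<subseteq> W"
    and \<U>: "\<forall>U\<in>\<U>. openin X U" "{x \<in> topspace X. p x = p q} \<subseteq> \<Union>\<U>"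
  shows "\<exists>\<F> V. finite \<F> \<and> \<F> \<subseteq> \<U> \<and> openin X V \<and> saturated_in X p V \<and> q \<in> V \<and> V \<subseteq> \<Union>\<F>"
proof -
  obtain \<F> where \<F>: "finite \<F>" "\<F> \<subseteq> \<U>" "{x \<in> topspace X. p x = p q} \<subseteq> \<Union>\<F>"
    using fibre \<U> unfolding compactin_def by blast
  moreover have "openin X (\<Union>\<F>)"
    using \<F>(2) \<U>(1) by blast
  ultimately show ?thesis
    using nbhd[of "\<Union>\<F>"] by blast
qed

lemma compactin_qtop_preimage:
  assumes fibre: "\<And>q. q \<in> topspace X \<Longrightarrow> compactin X {x \<in> topspace X. p x = p q}"
    and nbhd: "\<And>q W. q \<in> topspace X \<Longrightarrow> openin X W \<Longrightarrow> {x \<in> topspace X. p x = p q} \<subseteq> W \<Longrightarrow>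
       \<exists>V. openin X V \<and> saturated_in X p V \<and> q \<in> V \<and> V \<subseteq> W"
    and L: "compactin (qtop X p) L"
  shows "compactin X {x \<in> topspace X. p x \<in> L}" (is "compactin X ?P")
  unfolding compactin_def
proof (intro conjI allI impI)
  fix \<U> assume \<U>: "(\<forall>U\<in>\<U>. openin X U) \<and> ?P \<subseteq> \<Union>\<U>"
  have "\<forall>q\<in>?P. \<exists>\<F> V. finite \<F> \<and> \<F> \<subseteq> \<U> \<and> openin X V \<and> saturated_in X p V \<and> q \<in> V \<and> V \<subseteq> \<Union>\<F>"
  proof
    fix q assume "q \<in> ?P"
    then show "\<exists>\<F> V. finite \<F> \<and> \<F> \<subseteq> \<U> \<and> openin X V \<and> saturated_in X p V \<and> q \<in> V \<and> V \<subseteq> \<Union>\<F>"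
      using \<U> by (intro saturated_open_finite_cover fibre nbhd) auto
  qed
  then obtain \<F> V where FV_all: "\<forall>q\<in>?P. finite (\<F> q) \<and> \<F> q \<subseteq> \<U> \<and> openin X (V q) \<and>
      saturated_in X p (V q) \<and> q \<in> V q \<and> V q \<subseteq> \<Union>(\<F> q)"
    by (metis (no_types, lifting) bchoice)
  note FV = FV_all[rule_format]
  have "\<forall>B\<in>(\<lambda>q. p ` V q) ` ?P. openin (qtop X p) B"
    using FV by (auto intro!: openin_qtop_image_saturated)
  moreover have "L \<subseteq> \<Union>((\<lambda>q. p ` V q) ` ?P)"
  proof
    fix D assume "D \<in> L"
    moreover obtain q where "q \<in> topspace X" "D = p q"
      using compactin_subset_topspace[OF L] \<open>D \<in> L\<close> by (auto simp: topspace_qtop)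
    ultimately show "D \<in> \<Union>((\<lambda>q. p ` V q) ` ?P)"
      using FV[of q] by blast
  qed
  ultimately obtain \<G> where \<G>: "finite \<G>" "\<G> \<subseteq> (\<lambda>q. p ` V q) ` ?P" "L \<subseteq> \<Union>\<G>"
    using L unfolding compactin_def by meson
  then obtain Q where Q: "finite Q" "Q \<subseteq> ?P" "L \<subseteq> \<Union>((\<lambda>q. p ` V q) ` Q)"
    using finite_subset_image[OF \<G>(1,2)] by blast
  have "?P \<subseteq> \<Union>(\<Union>(\<F> ` Q))"
  proof
    fix x assume x: "x \<in> ?P"
    then obtain q y where "q \<in> Q" "y \<in> V q" "p x = p y"
      using Q(3) by blast
    then have "q \<in> Q" "x \<in> V q"
      using FV[of q] Q(2) x by (auto simp: saturated_in_def)
    then show "x \<in> \<Union>(\<Union>(\<F> ` Q))"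
      using FV[of q] Q(2) by blast
  qed
  moreover have "finite (\<Union>(\<F> ` Q))"
    using Q FV by blast
  moreover have "\<Union>(\<F> ` Q) \<subseteq> \<U>"
    using Q FV by fast
  ultimately show "\<exists>\<F>'. finite \<F>' \<and> \<F>' \<subseteq> \<U> \<and> ?P \<subseteq> \<Union>\<F>'"
    by blast
qed auto

lemma topspace_compact_open: "topspace (compact_open X Y) = cmaps X Y"
proof -
  have "cmaps X Y = {f \<in> cmaps X Y. f ` {} \<subseteq> {}}"
    by simp
  then have "cmaps X Y \<in> {{f \<in> cmaps X Y. f ` K \<subseteq> U} | K U. compactin X K \<and> openin Y U}"
    by blast
  then show ?thesis
    unfolding compact_open_def topology_generated_by_topspace by blast
qed

lemma openin_compact_open:
  "compactin X K \<Longrightarrow> openin Y U \<Longrightarrow> openin (compact_open X Y) {f \<in> cmaps X Y. f ` K \<subseteq> U}"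
  unfolding compact_open_def by (rule topology_generated_by_Basis) blast

section \<open>The linear flow and its orbit space\<close>

lemma topspace_torus: "topspace torus = sphere 0 1 \<times> sphere 0 1"
  by (simp add: torus_def)

lemma compactin_torus: "compactin torus K \<longleftrightarrow> compact K \<and> K \<subseteq> topspace torus"
  by (simp add: torus_def compactin_subtopology)

lemma flowH_0 [simp]: "flowH \<alpha> q 0 = q"
  by (simp add: flowH_def)

lemma flowH_add: "flowH \<alpha> (flowH \<alpha> q s) t = flowH \<alpha> q (s + t)"
  by (simp add: flowH_def mult.assoc cis_mult distrib_left)

lemma flowH_in_torus: "q \<in> topspace torus \<Longrightarrow> flowH \<alpha> q t \<in> topspace torus"
  by (auto simp: topspace_torus flowH_def norm_mult)

lemma continuous_on_flowH: "continuous_on UNIV (\<lambda>(q, t). flowH \<alpha> q t)"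
  unfolding flowH_def case_prod_unfold by (intro continuous_intros)

lemma continuous_on_flowH_time: "continuous_on A (flowH \<alpha> q)"
  unfolding flowH_def by (intro continuous_intros)

lemma in_orbp: "q \<in> orbp \<alpha> q"
  unfolding orbp_def by (metis flowH_0 rangeI)

lemma orbp_flowH [simp]: "orbp \<alpha> (flowH \<alpha> q s) = orbp \<alpha> q"
proof -
  have "range (\<lambda>t. flowH \<alpha> q (s + t)) = range (flowH \<alpha> q)"
    by (metis add_diff_cancel_left' surj_def surj_plus range_composition)
  then show ?thesis
    unfolding orbp_def by (simp add: flowH_add)
qed

lemma orbp_eq_iff: "orbp \<alpha> x = orbp \<alpha> y \<longleftrightarrow> x \<in> orbp \<alpha> y"
  by (metis in_orbp orbp_def orbp_flowH rangeE)

lemma orbp_subset_torus: "q \<in> topspace torus \<Longrightarrow> orbp \<alpha> q \<subseteq> topspace torus"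
  by (auto simp: orbp_def flowH_in_torus)

lemma orbp_fibre:
  "q \<in> topspace torus \<Longrightarrow> {x \<in> topspace torus. orbp \<alpha> x = orbp \<alpha> q} = orbp \<alpha> q"
  using orbp_subset_torus[of q \<alpha>] by (auto simp: orbp_eq_iff)

lemma topspace_orbspace: "topspace (orbspace \<alpha>) = orbp \<alpha> ` topspace torus"
  by (simp add: orbspace_def topspace_qtop)

lemma openin_orbspace: "openin (orbspace \<alpha>) U \<longleftrightarrow>
    U \<subseteq> orbp \<alpha> ` topspace torus \<and> openin torus {x \<in> topspace torus. orbp \<alpha> x \<in> U}"
  by (simp add: orbspace_def openin_qtop)

lemma EndDelta_continuous_map: "h \<in> EndDelta \<alpha> \<Longrightarrow> continuous_map torus torus h"
  by (simp add: EndDelta_def cmaps_def)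

lemma EndDelta_subset_cmaps: "EndDelta \<alpha> \<subseteq> cmaps torus torus"
  by (simp add: EndDelta_def)

text \<open>\<psi> evaluates h at an arbitrary representative of the orbit; as h maps orbits into orbits,
  the choice does not matter.\<close>

lemma psi_orbp:
  assumes h: "h \<in> EndDelta \<alpha>" and x: "x \<in> topspace torus"
  shows "psi \<alpha> h (orbp \<alpha> x) = orbp \<alpha> (h x)"
proof -
  obtain e where e: "h ` orbp \<alpha> x \<subseteq> orbp \<alpha> e"
    using h x unfolding EndDelta_def Delta_def by blast
  have "(SOME y. y \<in> orbp \<alpha> x) \<in> orbp \<alpha> x"
    by (rule someI, rule in_orbp)
  then have "orbp \<alpha> (h (SOME y. y \<in> orbp \<alpha> x)) = orbp \<alpha> (h x)"
    using e in_orbp by (metis image_subset_iff orbp_eq_iff)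
  then show ?thesis
    using x by (simp add: psi_def topspace_orbspace)
qed

lemma psi_in_cmaps:
  assumes h: "h \<in> EndDelta \<alpha>"
  shows "psi \<alpha> h \<in> cmaps (orbspace \<alpha>) (orbspace \<alpha>)"
proof -
  have hc: "continuous_map torus torus h"
    using h by (rule EndDelta_continuous_map)
  have "continuous_map (orbspace \<alpha>) (orbspace \<alpha>) (psi \<alpha> h)"
    unfolding continuous_map
  proof (intro conjI allI impI)
    show "psi \<alpha> h ` topspace (orbspace \<alpha>) \<subseteq> topspace (orbspace \<alpha>)"
      using psi_orbp[OF h] continuous_map_image_subset_topspace[OF hc]
      by (auto simp: topspace_orbspace)
    fix U assume U: "openin (orbspace \<alpha>) U"
    then have "openin torus {x \<in> topspace torus. h x \<in> {x \<in> topspace torus. orbp \<alpha> x \<in> U}}"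
      by (intro openin_continuous_map_preimage[OF hc]) (simp add: openin_orbspace)
    moreover have "{x \<in> topspace torus. h x \<in> {x \<in> topspace torus. orbp \<alpha> x \<in> U}} =
        {x \<in> topspace torus. orbp \<alpha> x \<in> {D \<in> topspace (orbspace \<alpha>). psi \<alpha> h D \<in> U}}"
      using psi_orbp[OF h] continuous_map_image_subset_topspace[OF hc]
      by (auto simp: topspace_orbspace)
    ultimately show "openin (orbspace \<alpha>) {D \<in> topspace (orbspace \<alpha>). psi \<alpha> h D \<in> U}"
      by (intro openin_orbspace[THEN iffD2] conjI) (auto simp: topspace_orbspace)
  qed
  then show ?thesis
    unfolding cmaps_def psi_def by simp
qed

lemma psi_maps_into_iff:
  assumes h: "h \<in> EndDelta \<alpha>" and L: "L \<subseteq> topspace (orbspace \<alpha>)"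
  shows "psi \<alpha> h ` L \<subseteq> W \<longleftrightarrow>
    h ` {x \<in> topspace torus. orbp \<alpha> x \<in> L} \<subseteq> {x \<in> topspace torus. orbp \<alpha> x \<in> W}"
proof
  assume "psi \<alpha> h ` L \<subseteq> W"
  show "h ` {x \<in> topspace torus. orbp \<alpha> x \<in> L} \<subseteq> {x \<in> topspace torus. orbp \<alpha> x \<in> W}"
  proof
    fix y assume "y \<in> h ` {x \<in> topspace torus. orbp \<alpha> x \<in> L}"
    then obtain x where x: "x \<in> topspace torus" "orbp \<alpha> x \<in> L" "y = h x"
      by blast
    then have "orbp \<alpha> (h x) \<in> W"
      using \<open>psi \<alpha> h ` L \<subseteq> W\<close> psi_orbp[OF h x(1)] by blast
    moreover have "h x \<in> topspace torus"
      using x(1) continuous_map_image_subset_topspace[OF EndDelta_continuous_map[OF h]] by blast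
    ultimately show "y \<in> {x \<in> topspace torus. orbp \<alpha> x \<in> W}"
      using x(3) by blast
  qed
next
  assume hP: "h ` {x \<in> topspace torus. orbp \<alpha> x \<in> L} \<subseteq> {x \<in> topspace torus. orbp \<alpha> x \<in> W}"
  show "psi \<alpha> h ` L \<subseteq> W"
  proof
    fix D assume "D \<in> psi \<alpha> h ` L"
    then obtain x where "x \<in> topspace torus" "orbp \<alpha> x \<in> L" "D = psi \<alpha> h (orbp \<alpha> x)"
      using L by (auto simp: topspace_orbspace)
    then show "D \<in> W"
      using hP psi_orbp[OF h] by auto
  qed
qed

lemma topspace_EndDelta:
  "topspace (subtopology (compact_open torus torus) (EndDelta \<alpha>)) = EndDelta \<alpha>"
  using EndDelta_subset_cmaps by (simp add: topspace_compact_open Int_absorb1)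

lemma openin_psi_preimage_subbasic:
  assumes compact: "\<And>L W. compactin (orbspace \<alpha>) L \<Longrightarrow> openin (orbspace \<alpha>) W \<Longrightarrow> W \<noteq> {} \<Longrightarrow>
      W \<noteq> topspace (orbspace \<alpha>) \<Longrightarrow> compactin torus {x \<in> topspace torus. orbp \<alpha> x \<in> L}"
    and L: "compactin (orbspace \<alpha>) L" and W: "openin (orbspace \<alpha>) W"
  shows "openin (subtopology (compact_open torus torus) (EndDelta \<alpha>))
    {h \<in> EndDelta \<alpha>. psi \<alpha> h ` L \<subseteq> W}"
proof -
  let ?Y = "orbspace \<alpha>"
  let ?E = "subtopology (compact_open torus torus) (EndDelta \<alpha>)"
  have L_sub: "L \<subseteq> topspace ?Y"
    using L by (rule compactin_subset_topspace)
  consider "L = {} \<or> W = topspace ?Y" | "L \<noteq> {}" "W = {}" | "W \<noteq> {}" "W \<noteq> topspace ?Y"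
    by blast
  then show ?thesis
  proof cases
    case 1
    have "psi \<alpha> h ` L \<subseteq> topspace ?Y" if "h \<in> EndDelta \<alpha>" for h
      using psi_in_cmaps[OF that] L_sub continuous_map_image_subset_topspace
      unfolding cmaps_def by blast
    then have "{h \<in> EndDelta \<alpha>. psi \<alpha> h ` L \<subseteq> W} = topspace ?E"
      using 1 topspace_EndDelta by blast
    then show ?thesis
      by (simp only: openin_topspace)
  next
    case 2
    then have "{h \<in> EndDelta \<alpha>. psi \<alpha> h ` L \<subseteq> W} = {}"
      by blast
    then show ?thesis
      by (simp only: openin_empty)
  next
    case 3
    let ?P = "{x \<in> topspace torus. orbp \<alpha> x \<in> L}"
    let ?V = "{x \<in> topspace torus. orbp \<alpha> x \<in> W}"
    have "{h \<in> EndDelta \<alpha>. psi \<alpha> h ` L \<subseteq> W} = {h \<in> EndDelta \<alpha>. h ` ?P \<subseteq> ?V}"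
      using psi_maps_into_iff[OF _ L_sub] by blast
    also have "\<dots> = EndDelta \<alpha> \<inter> {f \<in> cmaps torus torus. f ` ?P \<subseteq> ?V}"
      using EndDelta_subset_cmaps by blast
    finally have eq: "{h \<in> EndDelta \<alpha>. psi \<alpha> h ` L \<subseteq> W} =
        EndDelta \<alpha> \<inter> {f \<in> cmaps torus torus. f ` ?P \<subseteq> ?V}" .
    have "openin (compact_open torus torus) {f \<in> cmaps torus torus. f ` ?P \<subseteq> ?V}"
      using compact[OF L W 3] W by (intro openin_compact_open) (simp_all add: openin_orbspace)
    then show ?thesis
      unfolding eq by (simp add: openin_subtopology_Int2)
  qed
qed

lemma prop_CONT_if_compact_preimages:
  assumes "\<And>L W. compactin (orbspace \<alpha>) L \<Longrightarrow> openin (orbspace \<alpha>) W \<Longrightarrow> W \<noteq> {} \<Longrightarrow>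
      W \<noteq> topspace (orbspace \<alpha>) \<Longrightarrow> compactin torus {x \<in> topspace torus. orbp \<alpha> x \<in> L}"
  shows "prop_CONT \<alpha>"
  unfolding prop_CONT_def compact_open_def[of "orbspace \<alpha>"] continuous_on_generated_topo_iff
    topspace_EndDelta
proof (intro conjI allI impI)
  let ?Y = "orbspace \<alpha>"
  fix U assume "U \<in> {{f \<in> cmaps ?Y ?Y. f ` K \<subseteq> W} | K W. compactin ?Y K \<and> openin ?Y W}"
  then obtain L W where U: "U = {f \<in> cmaps ?Y ?Y. f ` L \<subseteq> W}" "compactin ?Y L" "openin ?Y W"
    by blast
  have "psi \<alpha> -` U \<inter> EndDelta \<alpha> = {h \<in> EndDelta \<alpha>. psi \<alpha> h ` L \<subseteq> W}"
    using psi_in_cmaps unfolding U(1) by blast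
  then show "openin (subtopology (compact_open torus torus) (EndDelta \<alpha>)) (psi \<alpha> -` U \<inter> EndDelta \<alpha>)"
    using openin_psi_preimage_subbasic[OF assms U(2,3)] by simp
next
  let ?Y = "orbspace \<alpha>"
  have "psi \<alpha> ` EndDelta \<alpha> \<subseteq> {f \<in> cmaps ?Y ?Y. f ` {} \<subseteq> {}}"
    using psi_in_cmaps by blast
  then show "psi \<alpha> ` EndDelta \<alpha> \<subseteq> \<Union>{{f \<in> cmaps ?Y ?Y. f ` K \<subseteq> W} | K W. compactin ?Y K \<and> openin ?Y W}"
    by blast
qed

section \<open>Rational slope\<close>

lemma flowH_periodic:
  assumes "\<alpha> \<in> \<rat>"
  obtains c where "c > 0" "\<And>q t k. flowH \<alpha> q (t + of_int k * c) = flowH \<alpha> q t"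
proof -
  obtain a b where ab: "b > 0" "\<alpha> = of_int a / of_int b"
    using Rats_cases'[OF assms] by metis
  have "flowH \<alpha> q (t + of_int k * of_int b) = flowH \<alpha> q t" for q t k
  proof -
    have "\<alpha> * of_int b = of_int a"
      using ab by simp
    then have "2 * pi * (t + of_int k * of_int b) = 2 * pi * t + 2 * pi * of_int (k * b)"
      "2 * pi * \<alpha> * (t + of_int k * of_int b) = 2 * pi * \<alpha> * t + 2 * pi * of_int (k * a)"
      by (simp_all add: algebra_simps)
    then show ?thesis
      by (simp add: flowH_def cis_mult[symmetric] cis_multiple_2pi)
  qed
  then show ?thesis
    using ab(1) that[of "of_int b"] by simp
qed

lemma orbp_eq_flowH_image_period:
  assumes c: "c > 0" and per: "\<And>q t k. flowH \<alpha> q (t + of_int k * c) = flowH \<alpha> q t"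
  shows "orbp \<alpha> q = flowH \<alpha> q ` {0..c}"
proof
  show "orbp \<alpha> q \<subseteq> flowH \<alpha> q ` {0..c}"
  proof
    fix y assume "y \<in> orbp \<alpha> q"
    then obtain s where s: "y = flowH \<alpha> q s"
      by (auto simp: orbp_def)
    define k where "k = \<lfloor>s / c\<rfloor>"
    have "of_int k \<le> s / c" "s / c < of_int k + 1"
      unfolding k_def by linarith+
    then have "of_int k * c \<le> s" "s < (of_int k + 1) * c"
      using c by (simp_all add: field_simps)
    then have "s - of_int k * c \<in> {0..c}"
      by (auto simp: algebra_simps)
    moreover have "y = flowH \<alpha> q (s - of_int k * c)"
      using per[of q "s - of_int k * c" k] s by simp
    ultimately show "y \<in> flowH \<alpha> q ` {0..c}"
      by blast
  qed
qed (auto simp: orbp_def)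

lemma openin_torus_orbp_subset:
  assumes orbits: "\<And>q. orbp \<alpha> q = flowH \<alpha> q ` {a..b}" and W: "openin torus W"
  shows "openin torus {y \<in> topspace torus. orbp \<alpha> y \<subseteq> W}" (is "openin torus ?V")
proof -
  obtain W' where W': "open W'" "W = topspace torus \<inter> W'"
    using W unfolding torus_def openin_open by auto
  let ?G = "(\<lambda>(q, t). flowH \<alpha> q t) -` W'"
  have "open ?G"
    using continuous_on_flowH W'(1) by (simp add: continuous_on_open_vimage)
  show ?thesis
    unfolding openin_subopen[of torus ?V]
  proof
    fix y assume y: "y \<in> ?V"
    have "flowH \<alpha> y t \<in> W'" for t
      using y W'(2) rangeI[of "flowH \<alpha> y" t] unfolding orbp_def by blast
    then have slice: "{y} \<times> {a..b} \<subseteq> ?G"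
      by auto
    obtain X0 where X0: "y \<in> X0" "open X0" "X0 \<times> {a..b} \<subseteq> ?G"
      using Elementary_Topology.tube_lemma[OF compact_Icc \<open>open ?G\<close> slice] by blast
    have "topspace torus \<inter> X0 \<subseteq> ?V"
    proof
      fix z assume z: "z \<in> topspace torus \<inter> X0"
      have "flowH \<alpha> z t \<in> W" if "t \<in> {a..b}" for t
      proof -
        have "(z, t) \<in> ?G"
          using X0(3) z that by blast
        then show ?thesis
          using z W'(2) flowH_in_torus by simp
      qed
      then show "z \<in> ?V"
        using z by (auto simp: orbits)
    qed
    moreover have "openin torus (topspace torus \<inter> X0)"
      using X0(2) by (simp add: torus_def openin_open_Int)
    ultimately show "\<exists>T. openin torus T \<and> y \<in> T \<and> T \<subseteq> ?V"
      using y X0(1) by blast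
  qed
qed

lemma compactin_orbp_preimage_rational:
  assumes "\<alpha> \<in> \<rat>" and L: "compactin (orbspace \<alpha>) L"
  shows "compactin torus {x \<in> topspace torus. orbp \<alpha> x \<in> L}"
proof -
  obtain c where c: "c > 0" and per: "\<And>q t k. flowH \<alpha> q (t + of_int k * c) = flowH \<alpha> q t"
    using flowH_periodic[OF assms(1)] by blast
  note orbits = orbp_eq_flowH_image_period[OF c per]
  have "compactin torus {x \<in> topspace torus. orbp \<alpha> x = orbp \<alpha> q}" if "q \<in> topspace torus" for q
    unfolding orbp_fibre[OF that] compactin_torus
  proof
    show "compact (orbp \<alpha> q)"
      unfolding orbits by (intro compact_continuous_image continuous_on_flowH_time compact_Icc)
  qed (rule orbp_subset_torus[OF that])
  moreover have "\<exists>V. openin torus V \<and> saturated_in torus (orbp \<alpha>) V \<and> q \<in> V \<and> V \<subseteq> W"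
    if q: "q \<in> topspace torus" and W: "openin torus W"
      and "{x \<in> topspace torus. orbp \<alpha> x = orbp \<alpha> q} \<subseteq> W" for q W
  proof (intro exI conjI)
    show "openin torus {y \<in> topspace torus. orbp \<alpha> y \<subseteq> W}"
      using openin_torus_orbp_subset[OF orbits W] .
    show "q \<in> {y \<in> topspace torus. orbp \<alpha> y \<subseteq> W}"
      using that orbp_fibre[OF q] by simp
    show "{y \<in> topspace torus. orbp \<alpha> y \<subseteq> W} \<subseteq> W"
      using in_orbp by blast
  qed (auto simp: saturated_in_def)
  ultimately show ?thesis
    using compactin_qtop_preimage[of torus "orbp \<alpha>"] L unfolding orbspace_def by blast
qed

lemma prop_COMP_rational: "\<alpha> \<in> \<rat> \<Longrightarrow> prop_COMP \<alpha>"
  unfolding prop_COMP_def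
proof (intro allI impI exI conjI)
  fix L assume "\<alpha> \<in> \<rat>" "compactin (orbspace \<alpha>) L"
  then show "compactin torus {x \<in> topspace torus. orbp \<alpha> x \<in> L}"
    by (rule compactin_orbp_preimage_rational)
  show "orbp \<alpha> ` {x \<in> topspace torus. orbp \<alpha> x \<in> L} = L"
    using compactin_subset_topspace[OF \<open>compactin (orbspace \<alpha>) L\<close>]
    by (auto simp: topspace_orbspace)
qed

lemma prop_CONT_rational: "\<alpha> \<in> \<rat> \<Longrightarrow> prop_CONT \<alpha>"
  by (intro prop_CONT_if_compact_preimages compactin_orbp_preimage_rational)

section \<open>Irrational slope\<close>

lemma cis_Arg_unit:
  assumes "norm z = 1"
  shows "cis (Arg z) = z"
proof -
  have "z \<noteq> 0"
    using assms by auto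
  then show ?thesis
    using assms by (simp add: cis_Arg sgn_eq)
qed

lemma cis_add_2pi_int: "cis (x + 2 * pi * of_int k) = cis x"
  by (simp add: cis_mult[symmetric] cis_multiple_2pi)

lemma cis_multiples_dense:
  assumes irr: "\<alpha> \<notin> \<rat>" and e: "e > 0"
  obtains k :: int where "dist (cis (\<theta> + 2 * pi * \<alpha> * of_int k)) (cis \<phi>) < e"
proof -
  have "isCont cis \<phi>"
    using continuous_on_cis[OF continuous_on_id, of UNIV] by (simp add: continuous_on_eq_continuous_at)
  then obtain d where d: "d > 0" "\<And>x. dist x \<phi> < d \<Longrightarrow> dist (cis x) (cis \<phi>) < e"
    using e unfolding continuous_at_eps_delta by blast
  have "d / (2 * pi) > 0"
    using d(1) by simp
  then obtain h k where hk: "\<bar>of_int k * \<alpha> - of_int h - (\<phi> - \<theta>) / (2 * pi)\<bar> < d / (2 * pi)"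
    using sequence_of_fractional_parts_is_dense[OF irr] by metis
  define x where "x = \<theta> + 2 * pi * \<alpha> * of_int k - 2 * pi * of_int h"
  have "cis (\<theta> + 2 * pi * \<alpha> * of_int k) = cis (x + 2 * pi * of_int h)"
    by (simp add: x_def)
  then have cis_x: "cis (\<theta> + 2 * pi * \<alpha> * of_int k) = cis x"
    by (simp only: cis_add_2pi_int)
  have "dist x \<phi> = 2 * pi * \<bar>of_int k * \<alpha> - of_int h - (\<phi> - \<theta>) / (2 * pi)\<bar>"
    unfolding x_def dist_real_def by (simp add: abs_mult[symmetric] field_simps)
  then have "dist x \<phi> < d"
    using hk by (simp add: field_simps)
  then show ?thesis
    using d(2) by (intro that[of k]) (simp only: cis_x)
qed

lemma torus_point_eq_cis:
  assumes "q \<in> topspace torus"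
  obtains a b where "q = (cis a, cis b)"
proof -
  have "norm (fst q) = 1" "norm (snd q) = 1"
    using assms by (auto simp: topspace_torus mem_Times_iff)
  then have "q = (cis (Arg (fst q)), cis (Arg (snd q)))"
    by (simp add: cis_Arg_unit)
  then show ?thesis
    by (rule that)
qed

lemma flowH_cis: "flowH \<alpha> (cis a, cis b) t = (cis (a + 2 * pi * t), cis (b + 2 * pi * \<alpha> * t))"
  by (simp add: flowH_def cis_mult)

lemma flowH_orbit_dense:
  assumes irr: "\<alpha> \<notin> \<rat>" and q: "q \<in> topspace torus" and r: "r \<in> topspace torus" and e: "e > 0"
  obtains t where "dist (flowH \<alpha> q t) r < e"
proof -
  obtain a b where q_ab: "q = (cis a, cis b)"
    using torus_point_eq_cis[OF q] by blast
  obtain a' b' where r_ab: "r = (cis a', cis b')"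
    using torus_point_eq_cis[OF r] by blast
  txt \<open>At time t0 the first coordinates agree; integer shifts of time keep them equal and move
    the second coordinate by the multiples of 2\<pi>\<alpha>, which are dense modulo 2\<pi>.\<close>
  define t0 where "t0 = (a' - a) / (2 * pi)"
  obtain k :: int where k: "dist (cis ((b + 2 * pi * \<alpha> * t0) + 2 * pi * \<alpha> * of_int k)) (cis b') < e"
    using cis_multiples_dense[OF irr e] by blast
  have "a + 2 * pi * (t0 + of_int k) = a' + 2 * pi * of_int k"
    by (simp add: t0_def field_simps)
  moreover have "b + 2 * pi * \<alpha> * (t0 + of_int k) = (b + 2 * pi * \<alpha> * t0) + 2 * pi * \<alpha> * of_int k"
    by (simp add: algebra_simps)
  ultimately have "flowH \<alpha> q (t0 + of_int k) = (cis a', cis ((b + 2 * pi * \<alpha> * t0) + 2 * pi * \<alpha> * of_int k))"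
    by (simp only: q_ab flowH_cis cis_add_2pi_int)
  then have "dist (flowH \<alpha> q (t0 + of_int k)) r = dist (cis ((b + 2 * pi * \<alpha> * t0) + 2 * pi * \<alpha> * of_int k)) (cis b')"
    unfolding r_ab by (simp add: dist_Pair_Pair)
  then have "dist (flowH \<alpha> q (t0 + of_int k)) r < e"
    using k by simp
  then show ?thesis
    by (rule that)
qed

lemma flowH_orbit_meets_open:
  assumes irr: "\<alpha> \<notin> \<rat>" and q: "q \<in> topspace torus" and V: "openin torus V" "V \<noteq> {}"
  obtains t where "flowH \<alpha> q t \<in> V"
proof -
  obtain r where r: "r \<in> V"
    using V(2) by blast
  then obtain e where e: "e > 0" "\<And>x. x \<in> topspace torus \<Longrightarrow> dist x r < e \<Longrightarrow> x \<in> V"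
    using V(1) unfolding openin_euclidean_subtopology_iff torus_def by auto
  have "r \<in> topspace torus"
    using openin_subset[OF V(1)] r by blast
  then obtain t where "dist (flowH \<alpha> q t) r < e"
    using flowH_orbit_dense[OF irr q _ e(1)] by blast
  then show ?thesis
    using e(2) flowH_in_torus[OF q] that by blast
qed

lemma interior_of_eq_empty_if_disjoint_orbit:
  assumes irr: "\<alpha> \<notin> \<rat>" and q: "q \<in> topspace torus" and S: "S \<inter> orbp \<alpha> q = {}"
  shows "torus interior_of S = {}"
  unfolding interior_of_eq_empty
proof (intro allI impI)
  fix V assume V: "openin torus V \<and> V \<subseteq> S"
  show "V = {}"
  proof (rule ccontr)
    assume "V \<noteq> {}"
    then obtain t where "flowH \<alpha> q t \<in> V"
      using flowH_orbit_meets_open[OF irr q] V by blast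
    then show False
      using V S by (auto simp: orbp_def)
  qed
qed

lemma orbspace_open_irrational:
  assumes irr: "\<alpha> \<notin> \<rat>" and U: "openin (orbspace \<alpha>) U" "U \<noteq> {}"
  shows "U = topspace (orbspace \<alpha>)"
proof
  show "U \<subseteq> topspace (orbspace \<alpha>)"
    using U(1) by (rule openin_subset)
  let ?V = "{x \<in> topspace torus. orbp \<alpha> x \<in> U}"
  have V: "openin torus ?V" "U \<subseteq> orbp \<alpha> ` topspace torus"
    using U(1) by (simp_all add: openin_orbspace)
  then have "?V \<noteq> {}"
    using U(2) by blast
  show "topspace (orbspace \<alpha>) \<subseteq> U"
  proof
    fix D assume "D \<in> topspace (orbspace \<alpha>)"
    then obtain q where q: "q \<in> topspace torus" "D = orbp \<alpha> q"
      by (auto simp: topspace_orbspace)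
    obtain t where "flowH \<alpha> q t \<in> ?V"
      using flowH_orbit_meets_open[OF irr q(1) V(1) \<open>?V \<noteq> {}\<close>] .
    then show "D \<in> U"
      using q(2) by simp
  qed
qed

lemma compactin_orbspace_irrational:
  assumes irr: "\<alpha> \<notin> \<rat>" and L: "L \<subseteq> topspace (orbspace \<alpha>)"
  shows "compactin (orbspace \<alpha>) L"
  unfolding compactin_def
proof (intro conjI allI impI)
  fix \<U> assume \<U>: "(\<forall>U\<in>\<U>. openin (orbspace \<alpha>) U) \<and> L \<subseteq> \<Union>\<U>"
  show "\<exists>\<F>. finite \<F> \<and> \<F> \<subseteq> \<U> \<and> L \<subseteq> \<Union>\<F>"
  proof (cases "L = {}")
    case False
    then obtain U where "U \<in> \<U>" "U \<noteq> {}"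
      using \<U> by blast
    then have "U \<in> \<U>" "L \<subseteq> U"
      using orbspace_open_irrational[OF irr] \<U> L by auto
    then show ?thesis
      by (intro exI[of _ "{U}"]) auto
  qed auto
qed (rule L)

lemma prop_CONT_irrational: "\<alpha> \<notin> \<rat> \<Longrightarrow> prop_CONT \<alpha>"
  using orbspace_open_irrational by (intro prop_CONT_if_compact_preimages) blast

lemma minus_one_notin_orbp_one:
  assumes irr: "\<alpha> \<notin> \<rat>"
  shows "(1, -1) \<notin> orbp \<alpha> (1, 1)"
proof
  assume "(1, -1) \<in> orbp \<alpha> (1, 1)"
  then obtain t where t: "cis (2 * pi * t) = 1" "cis (2 * pi * \<alpha> * t) = -1"
    by (auto simp: orbp_def flowH_def)
  then obtain n :: int where "t = of_int n"
    by (auto simp: cis_eq_1_iff)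
  moreover have "cis (2 * pi * \<alpha> * t - pi) = 1"
    using t(2) by (simp add: cis_divide[symmetric])
  then obtain m :: int where "2 * pi * \<alpha> * t - pi = 2 * pi * of_int m"
    by (auto simp: cis_eq_1_iff)
  ultimately have "pi * (\<alpha> * (2 * of_int n)) = pi * (2 * of_int m + 1)"
    by (simp add: algebra_simps)
  then have "\<alpha> * (2 * of_int n) = 2 * of_int m + 1"
    by simp
  moreover have "(2 * of_int n :: real) \<noteq> 0"
  proof
    assume "(2 * of_int n :: real) = 0"
    then have "of_int (2 * m + 1) = (0 :: real)"
      using calculation by simp
    then show False
      by presburger
  qed
  ultimately have "\<alpha> = of_int (2 * m + 1) / of_int (2 * n)"
    by (simp add: field_simps)
  then show False
    using irr by simp
qed

definition flow_tube :: "real \<Rightarrow> (complex \<times> complex) set \<Rightarrow> nat \<Rightarrow> (complex \<times> complex) set" where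
  "flow_tube \<alpha> K n = (\<lambda>(q, t). flowH \<alpha> q t) ` (K \<times> {- real n..real n})"

lemma closedin_flow_tube:
  assumes "compactin torus K"
  shows "closedin torus (flow_tube \<alpha> K n)"
proof -
  have "compact (flow_tube \<alpha> K n)"
    unfolding flow_tube_def using assms
    by (intro compact_continuous_image continuous_on_subset[OF continuous_on_flowH] compact_Times)
       (auto simp: compactin_torus)
  moreover have "flow_tube \<alpha> K n \<subseteq> topspace torus"
    using assms flowH_in_torus by (auto simp: flow_tube_def compactin_torus)
  ultimately show ?thesis
    by (simp add: torus_def closed_subset compact_imp_closed)
qed

lemma flow_tube_Un: "flow_tube \<alpha> (A \<union> B) n = flow_tube \<alpha> A n \<union> flow_tube \<alpha> B n"
  by (simp only: flow_tube_def Sigma_Un_distrib1 image_Un)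

lemma orbp_flow_tube: "x \<in> flow_tube \<alpha> K n \<Longrightarrow> orbp \<alpha> x \<in> orbp \<alpha> ` K"
  by (auto simp: flow_tube_def)

lemma torus_subset_flow_tubes:
  assumes "orbp \<alpha> ` topspace torus \<subseteq> orbp \<alpha> ` K"
  shows "topspace torus \<subseteq> (\<Union>n. flow_tube \<alpha> K n)"
proof
  fix x assume "x \<in> topspace torus"
  then obtain k where k: "k \<in> K" "x \<in> orbp \<alpha> k"
    using assms orbp_eq_iff[of \<alpha> x] by blast
  then obtain s where s: "x = flowH \<alpha> k s"
    by (auto simp: orbp_def)
  have "(k, s) \<in> K \<times> {- real (nat \<lceil>\<bar>s\<bar>\<rceil>)..real (nat \<lceil>\<bar>s\<bar>\<rceil>)}"
    using k(1) by auto linarith+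
  then have "x \<in> flow_tube \<alpha> K (nat \<lceil>\<bar>s\<bar>\<rceil>)"
    unfolding flow_tube_def s by (rule rev_image_eqI) simp
  then show "x \<in> (\<Union>n. flow_tube \<alpha> K n)"
    by blast
qed

lemma interior_of_flow_tube:
  assumes irr: "\<alpha> \<notin> \<rat>" and q: "q \<in> topspace torus" and "orbp \<alpha> q \<notin> orbp \<alpha> ` K"
  shows "torus interior_of (flow_tube \<alpha> K n) = {}"
proof (rule interior_of_eq_empty_if_disjoint_orbit[OF irr q])
  have "orbp \<alpha> x \<noteq> orbp \<alpha> q" if "x \<in> flow_tube \<alpha> K n" for x
    using orbp_flow_tube[OF that] assms(3) by auto
  then show "flow_tube \<alpha> K n \<inter> orbp \<alpha> q = {}"
    using orbp_eq_iff[of \<alpha> _ q] by blast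
qed

lemma completely_metrizable_space_torus: "completely_metrizable_space torus"
  unfolding torus_def
  by (intro completely_metrizable_space_closedin completely_metrizable_space_euclidean)
     (simp add: closed_Times)

lemma not_prop_COMP_irrational:
  assumes irr: "\<alpha> \<notin> \<rat>"
  shows "\<not> prop_COMP \<alpha>"
proof
  assume "prop_COMP \<alpha>"
  define q0 :: "complex \<times> complex" where "q0 = (1, 1)"
  have q0: "q0 \<in> topspace torus" "(1, -1) \<in> topspace torus"
    by (simp_all add: q0_def topspace_torus)
  have "compactin (orbspace \<alpha>) (topspace (orbspace \<alpha>) - {orbp \<alpha> q0})"
    using irr by (simp add: compactin_orbspace_irrational)
  then obtain K where K: "compactin torus K" "orbp \<alpha> ` K = topspace (orbspace \<alpha>) - {orbp \<alpha> q0}"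
    using \<open>prop_COMP \<alpha>\<close> unfolding prop_COMP_def by blast
  have "orbp \<alpha> (1, -1) \<notin> orbp \<alpha> ` {q0}"
    using minus_one_notin_orbp_one[OF irr] orbp_eq_iff[of \<alpha> "(1, -1)" q0] by (simp add: q0_def)
  then have nowhere_dense: "torus interior_of (flow_tube \<alpha> K n) = {}"
    "torus interior_of (flow_tube \<alpha> {q0} n) = {}" for n
    using interior_of_flow_tube[OF irr q0(1), of K] interior_of_flow_tube[OF irr q0(2)] K(2) by auto
  define \<G> where "\<G> = range (flow_tube \<alpha> K) \<union> range (flow_tube \<alpha> {q0})"
  have "compactin torus {q0}"
    using q0(1) by (simp add: compactin_torus)
  then have "closedin torus S \<and> torus interior_of S = {}" if "S \<in> \<G>" for S
    using that closedin_flow_tube[OF K(1)] closedin_flow_tube nowhere_dense by (auto simp: \<G>_def)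
  then have "torus interior_of \<Union>\<G> = {}"
    by (intro Baire_category_alt) (simp_all add: \<G>_def completely_metrizable_space_torus)
  moreover have "orbp \<alpha> ` topspace torus \<subseteq> orbp \<alpha> ` (K \<union> {q0})"
    using K(2) by (auto simp: topspace_orbspace)
  then have "topspace torus \<subseteq> (\<Union>n. flow_tube \<alpha> K n \<union> flow_tube \<alpha> {q0} n)"
    unfolding flow_tube_Un[symmetric] by (rule torus_subset_flow_tubes)
  then have "topspace torus \<subseteq> \<Union>\<G>"
    unfolding \<G>_def by blast
  ultimately show False
    using q0(1) interior_of_topspace[of torus] interior_of_mono[of "topspace torus" "\<Union>\<G>" torus]
    by blast
qed

theorem mainTheorem12:
  fixes \<alpha> :: real
  shows "prop_CONT \<alpha> \<and> (prop_COMP \<alpha> \<longleftrightarrow> \<alpha> \<in> \<rat>)"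
proof (cases "\<alpha> \<in> \<rat>")
  case True
  then show ?thesis
    using prop_CONT_rational prop_COMP_rational by blast
next
  case False
  then show ?thesis
    using prop_CONT_irrational not_prop_COMP_irrational by blast
qed

end
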